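(* Let $U$ be the subalgebra of the $q$-shuffle algebra $(\mathbb V,\star)$ generated by $x$ and $y$. Then every alternating word of $\mathbb V$ is contained in $U$. Here a word $v_1v_2\cdots v_n$ is alternating if $n\ge 1$ and $v_{i-1}\ne v_i$ for $2\le i\le n$.
   Context: Let $\mathbb F$ be a field and let $q\in\mathbb F$ be nonzero and not a root of unity. Let $\mathbb V$ be the free associative $\mathbb F$-algebra on noncommuting generators $x,y$. Its words (products of letters $x,y$, including the empty word $1$) form a basis. Set $\langle x,x\rangle=\langle y,y\rangle=2$ and $\langle x,y\rangle=\langle y,x\rangle=-2$. The $q$-shuffle product $\star$ on $\mathbb V$ is the bilinear product determined as follows: - $1\star v=v\star 1=v$; - for nontrivial words $u=u_1\cdots u_r$ and $v=v_1\cdots v_s$ (letters $u_i,v_j$; juxtaposition is concatenation), $$u\star v=u_1\big((u_2\cdots u_r)\star v\big)+v_1\big(u\star (v_2\cdots v_s)\big)q^{\langle u_1,v_1\rangle+\cdots+\langle u_r,v_1\rangle}.$$ This makes $\mathbb V$ an associative algebra, the $q$-shuffle algebra. *)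

theory Defs
  imports Main "HOL-Library.Poly_Mapping"
begin

datatype letter = X | Y

type_synonym word = "letter list"

type_synonym 'a V = "word \<Rightarrow>\<^sub>0 'a"

fun pairing :: "letter \<Rightarrow> letter \<Rightarrow> int" where
  "pairing a b = (if a = b then 2 else -2)"

definition wvec :: "word \<Rightarrow> 'a::field V" where
  "wvec w = Poly_Mapping.single w 1"

definition scal :: "'a::field \<Rightarrow> 'a V \<Rightarrow> 'a V" where
  "scal c p = Poly_Mapping.map (\<lambda>t. c * t) p"

definition prefix :: "letter \<Rightarrow> 'a::field V \<Rightarrow> 'a V" where
  "prefix a p = (\<Sum>w\<in>Poly_Mapping.keys p. Poly_Mapping.single (a # w) (Poly_Mapping.lookup p w))"

function wshuffle :: "'a::field \<Rightarrow> word \<Rightarrow> word \<Rightarrow> 'a V" where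
  "wshuffle q [] v = wvec v"
| "wshuffle q (a # u) [] = wvec (a # u)"
| "wshuffle q (a # u) (b # v) =
     prefix a (wshuffle q u (b # v))
     + scal (q powi (\<Sum>c\<leftarrow>a # u. pairing c b)) (prefix b (wshuffle q (a # u) v))"
  by pat_completeness auto
termination by (relation "measure (\<lambda>(_, u, v). length u + length v)") auto

definition qstar :: "'a::field \<Rightarrow> 'a V \<Rightarrow> 'a V \<Rightarrow> 'a V" where
  "qstar q f g = (\<Sum>u\<in>Poly_Mapping.keys f. \<Sum>v\<in>Poly_Mapping.keys g.
       scal (Poly_Mapping.lookup f u * Poly_Mapping.lookup g v) (wshuffle q u v))"

inductive_set gen_subalg :: "'a::field \<Rightarrow> 'a V set" for q where
  one: "wvec [] \<in> gen_subalg q"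
| gx: "wvec [X] \<in> gen_subalg q"
| gy: "wvec [Y] \<in> gen_subalg q"
| add: "f \<in> gen_subalg q \<Longrightarrow> g \<in> gen_subalg q \<Longrightarrow> f + g \<in> gen_subalg q"
| smul: "f \<in> gen_subalg q \<Longrightarrow> scal c f \<in> gen_subalg q"
| mult: "f \<in> gen_subalg q \<Longrightarrow> g \<in> gen_subalg q \<Longrightarrow> qstar q f g \<in> gen_subalg q"

definition alternating :: "word \<Rightarrow> bool" where
  "alternating w \<longleftrightarrow> length w \<ge> 1 \<and> (\<forall>i. 1 \<le> i \<and> i < length w \<longrightarrow> w ! (i - 1) \<noteq> w ! i)"

end

theory Submission
  imports Defs
begin

text \<open>
  Write \<open>G\<^sub>a(i)\<close> and \<open>W\<^sub>a(i)\<close> for the alternating words of lengths \<open>2i\<close> and \<open>2i+1\<close> starting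
  with the letter \<open>a\<close>, and \<open>b\<close> for the other letter. Comparing first letters expresses the
  coefficient of \<open>c w\<close> in \<open>u \<star> v\<close> through coefficients at \<open>w\<close>, so identities in \<open>V\<close> can be
  proved by induction on the coefficient word. Three identities carry the argument:
  \<^item> \<open>a \<star> G\<^sub>a(i) - q\<^sup>2 G\<^sub>a(i) \<star> a = (1 - q\<^sup>2) W\<^sub>a(i)\<close>,
  \<^item> \<open>q\<^sup>2 (a \<star> W\<^sub>b(i) - W\<^sub>b(i) \<star> a) = (q\<^sup>2 - 1) (G\<^sub>a(i+1) - G\<^sub>b(i+1))\<close>,
  \<^item> \<open>(\<Sum>i \<le> n+1. q^(2i) G\<^sub>a(i) \<star> G\<^sub>b(n+1-i)) = q\<^sup>2 (\<Sum>i \<le> n. q^(2i) W\<^sub>a(i) \<star> W\<^sub>b(n-i))\<close>.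
  Induct on the length. The first identity gives \<open>W\<^sub>a(i) \<in> U\<close> once \<open>G\<^sub>a(i) \<in> U\<close>. In the third,
  every term except \<open>G\<^sub>b(n+1) + q^(2n+2) G\<^sub>a(n+1)\<close> involves only shorter alternating words,
  while the second puts \<open>G\<^sub>a(n+1) - G\<^sub>b(n+1)\<close> into \<open>U\<close>. Since \<open>q\<^sup>2 \<noteq> 1\<close> and
  \<open>q^(2n+2) \<noteq> -1\<close>, both \<open>G\<^sub>a(n+1)\<close> and \<open>W\<^sub>a(n+1)\<close> lie in \<open>U\<close>.
\<close>

section \<open>Coefficients of q-shuffle products\<close>

lemma lookup_scal [simp]: "Poly_Mapping.lookup (scal c p) w = c * Poly_Mapping.lookup p w"
  by (simp add: scal_def Poly_Mapping.map.rep_eq when_def)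

lemma lookup_wvec [simp]: "Poly_Mapping.lookup (wvec u :: 'a::field V) w = (if w = u then 1 else 0)"
  by (simp add: wvec_def lookup_single when_def)

lemma lookup_prefix_Nil [simp]: "Poly_Mapping.lookup (prefix b p) [] = 0"
  by (simp add: prefix_def lookup_sum lookup_single when_def)

lemma lookup_prefix_Cons [simp]:
  "Poly_Mapping.lookup (prefix b p) (a # w) = (if b = a then Poly_Mapping.lookup p w else 0)"
proof -
  have "Poly_Mapping.lookup (prefix b p) (a # w) =
     (\<Sum>v\<in>Poly_Mapping.keys p. (if b = a \<and> v = w then Poly_Mapping.lookup p v else 0))"
    by (simp add: prefix_def lookup_sum lookup_single when_def; intro sum.cong; auto)
  also have "\<dots> = (if b = a then Poly_Mapping.lookup p w else 0)"
    by (cases "w \<in> Poly_Mapping.keys p") (auto simp: sum.delta in_keys_iff)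
  finally show ?thesis .
qed

lemma scal_0 [simp]: "scal 0 p = 0"
  by (rule poly_mapping_eqI) simp

lemma scal_1 [simp]: "scal 1 p = p"
  by (rule poly_mapping_eqI) simp

lemma scal_scal [simp]: "scal c (scal d p) = scal (c * d) p"
  by (rule poly_mapping_eqI) simp

definition pairing_sum :: "word \<Rightarrow> letter \<Rightarrow> int" where
  "pairing_sum u b = (\<Sum>c\<leftarrow>u. pairing c b)"

lemma pairing_sum_Nil [simp]: "pairing_sum [] b = 0"
  by (simp add: pairing_sum_def)

lemma pairing_sum_Cons [simp]: "pairing_sum (c # u) b = pairing c b + pairing_sum u b"
  by (simp add: pairing_sum_def)

abbreviation shuffle_coeff :: "'a::field \<Rightarrow> word \<Rightarrow> word \<Rightarrow> word \<Rightarrow> 'a" where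
  "shuffle_coeff q u v w \<equiv> Poly_Mapping.lookup (wshuffle q u v) w"

lemma wshuffle_Nil_right [simp]: "wshuffle q u [] = wvec u"
  by (cases u) auto

lemma shuffle_coeff_Nil: "shuffle_coeff q u v [] = (if u = [] \<and> v = [] then 1 else 0)"
  by (cases "(q, u, v)" rule: wshuffle.cases) (auto simp: lookup_add)

lemma shuffle_coeff_Cons: "shuffle_coeff q u v (a # w) =
   (case u of [] \<Rightarrow> 0 | b # u' \<Rightarrow> if b = a then shuffle_coeff q u' v w else 0)
 + (case v of [] \<Rightarrow> 0
    | b # v' \<Rightarrow> if b = a then q powi pairing_sum u a * shuffle_coeff q u v' w else 0)"
  by (cases "(q, u, v)" rule: wshuffle.cases)
    (auto simp: lookup_add pairing_sum_def split: list.split)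

declare wshuffle.simps(2,3) [simp del]

section \<open>Alternating words\<close>

fun other :: "letter \<Rightarrow> letter" where
  "other X = Y"
| "other Y = X"

lemma other_other [simp]: "other (other a) = a"
  by (cases a) auto

lemma other_neq [simp]: "other a \<noteq> a" "a \<noteq> other a"
  by (cases a; simp)+

lemma neq_imp_eq_other: "c \<noteq> a \<Longrightarrow> c = other a"
  by (cases a; cases c) auto

fun alt_word :: "letter \<Rightarrow> nat \<Rightarrow> word" where
  "alt_word a 0 = []"
| "alt_word a (Suc n) = a # alt_word (other a) n"

lemma length_alt_word [simp]: "length (alt_word a n) = n"
  by (induction n arbitrary: a) auto

definition alt_even :: "letter \<Rightarrow> nat \<Rightarrow> word" where
  "alt_even a i = alt_word a (2 * i)"

definition alt_odd :: "letter \<Rightarrow> nat \<Rightarrow> word" where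
  "alt_odd a i = alt_word a (Suc (2 * i))"

lemma alt_even_0 [simp]: "alt_even a 0 = []"
  by (simp add: alt_even_def)

lemma alt_even_Suc: "alt_even a (Suc i) = a # alt_odd (other a) i"
  by (simp add: alt_even_def alt_odd_def)

lemma alt_odd_Cons: "alt_odd a i = a # alt_even (other a) i"
  by (simp add: alt_even_def alt_odd_def)

lemma alt_even_eq_Nil_iff [simp]: "alt_even a i = [] \<longleftrightarrow> i = 0"
  by (cases i) (auto simp: alt_even_Suc)

lemma pairing_sum_alt_even [simp]: "pairing_sum (alt_even a i) c = 0"
proof (induction i arbitrary: a)
  case (Suc i)
  have "alt_even a (Suc i) = a # other a # alt_even a i"
    by (simp add: alt_even_Suc alt_odd_Cons)
  with Suc show ?case by (cases a; cases c) auto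
qed simp

lemma nth_alt_word: "i < n \<Longrightarrow> alt_word a n ! i = (if even i then a else other a)"
  by (induction n arbitrary: a i) (auto simp: nth_Cons split: nat.split)

lemma nth_alternating:
  assumes "alternating w" "i < length w"
  shows "w ! i = (if even i then hd w else other (hd w))"
  using assms(2)
proof (induction i)
  case 0
  then show ?case by (simp add: hd_conv_nth)
next
  case (Suc i)
  have "w ! i \<noteq> w ! Suc i"
    using assms(1) Suc.prems unfolding alternating_def by (metis diff_Suc_1 le_add1 plus_1_eq_Suc)
  then have "w ! Suc i = other (w ! i)"
    by (metis neq_imp_eq_other)
  with Suc show ?case by simp
qed

lemma alternating_eq_alt_word: "alternating w \<Longrightarrow> w = alt_word (hd w) (length w)"
  by (rule nth_equalityI) (simp_all add: nth_alternating nth_alt_word)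

section \<open>Shuffles of alternating words\<close>

lemma shuffle_coeff_even_even_Cons_left:
  "shuffle_coeff q (alt_even a i) (alt_even (other a) j) (a # w) =
     (if i = 0 then 0 else shuffle_coeff q (alt_odd (other a) (i - 1)) (alt_even (other a) j) w)"
  by (cases i; cases j) (auto simp: shuffle_coeff_Cons alt_even_Suc alt_odd_Cons)

lemma shuffle_coeff_even_even_Cons_right:
  "shuffle_coeff q (alt_even a i) (alt_even (other a) j) (other a # w) =
     (if j = 0 then 0 else shuffle_coeff q (alt_even a i) (alt_odd a (j - 1)) w)"
  by (cases i; cases j) (auto simp: shuffle_coeff_Cons alt_even_Suc alt_odd_Cons)

lemma shuffle_coeff_odd_odd_Cons_left:
  "shuffle_coeff q (alt_odd a i) (alt_odd (other a) j) (a # w) =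
     shuffle_coeff q (alt_even (other a) i) (alt_odd (other a) j) w"
  by (auto simp: shuffle_coeff_Cons alt_odd_Cons)

lemma shuffle_coeff_odd_odd_Cons_right:
  "shuffle_coeff q (alt_odd a i) (alt_odd (other a) j) (other a # w) =
     inverse (q^2) * shuffle_coeff q (alt_odd a i) (alt_even a j) w"
  by (auto simp: shuffle_coeff_Cons alt_odd_Cons power_int_minus)

lemma shuffle_coeff_odd_even_Cons_hd:
  "shuffle_coeff q (alt_odd c i) (alt_even c j) (c # w) =
     shuffle_coeff q (alt_even (other c) i) (alt_even c j) w
     + (if j = 0 then 0 else q^2 * shuffle_coeff q (alt_odd c i) (alt_odd (other c) (j - 1)) w)"
  by (cases j) (auto simp: shuffle_coeff_Cons alt_even_Suc alt_odd_Cons)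

lemma shuffle_coeff_even_odd_Cons_hd:
  "shuffle_coeff q (alt_even c i) (alt_odd c j) (c # w) =
     (if i = 0 then 0 else shuffle_coeff q (alt_odd (other c) (i - 1)) (alt_odd c j) w)
     + shuffle_coeff q (alt_even c i) (alt_even (other c) j) w"
  by (cases i) (auto simp: shuffle_coeff_Cons alt_even_Suc alt_odd_Cons)

lemma shuffle_coeff_odd_even_Cons_other:
  "shuffle_coeff q (alt_odd c i) (alt_even c j) (other c # w) = 0"
  by (cases j) (auto simp: shuffle_coeff_Cons alt_even_Suc alt_odd_Cons)

lemma shuffle_coeff_even_odd_Cons_other:
  "shuffle_coeff q (alt_even c i) (alt_odd c j) (other c # w) = 0"
  by (cases i) (auto simp: shuffle_coeff_Cons alt_even_Suc alt_odd_Cons)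

definition shuffle_convolution ::
    "'a::field \<Rightarrow> nat \<Rightarrow> (nat \<Rightarrow> word) \<Rightarrow> (nat \<Rightarrow> word) \<Rightarrow> 'a V" where
  "shuffle_convolution q n f g = (\<Sum>i\<le>n. scal (q^(2*i)) (wshuffle q (f i) (g (n - i))))"

lemma lookup_shuffle_convolution:
  "Poly_Mapping.lookup (shuffle_convolution q n f g) w =
     (\<Sum>i\<le>n. q^(2*i) * shuffle_coeff q (f i) (g (n - i)) w)"
  by (simp add: shuffle_convolution_def lookup_sum)

lemma shuffle_convolution_even_even_Cons_left:
  "Poly_Mapping.lookup (shuffle_convolution q (Suc m) (alt_even a) (alt_even (other a))) (a # w) =
     q^2 * Poly_Mapping.lookup (shuffle_convolution q m (alt_odd (other a)) (alt_even (other a))) w"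
  unfolding lookup_shuffle_convolution shuffle_coeff_even_even_Cons_left
  by (simp add: sum.atMost_Suc_shift sum_distrib_left power_add mult_ac power2_eq_square
      del: sum.atMost_Suc)

lemma shuffle_convolution_even_even_Cons_right:
  "Poly_Mapping.lookup
      (shuffle_convolution q (Suc m) (alt_even a) (alt_even (other a))) (other a # w) =
    Poly_Mapping.lookup (shuffle_convolution q m (alt_even a) (alt_odd a)) w"
  unfolding lookup_shuffle_convolution shuffle_coeff_even_even_Cons_right
  by (simp add: Suc_diff_le)

lemma shuffle_convolution_odd_odd_Cons_left:
  "Poly_Mapping.lookup (shuffle_convolution q m (alt_odd a) (alt_odd (other a))) (a # w) =
     Poly_Mapping.lookup (shuffle_convolution q m (alt_even (other a)) (alt_odd (other a))) w"
  unfolding lookup_shuffle_convolution shuffle_coeff_odd_odd_Cons_left ..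

lemma shuffle_convolution_odd_odd_Cons_right:
  assumes "q \<noteq> 0"
  shows "q^2 * Poly_Mapping.lookup
      (shuffle_convolution q m (alt_odd a) (alt_odd (other a))) (other a # w) =
    Poly_Mapping.lookup (shuffle_convolution q m (alt_odd a) (alt_even a)) w"
  unfolding lookup_shuffle_convolution shuffle_coeff_odd_odd_Cons_right
  using assms by (simp add: sum_distrib_left field_simps)

lemma shuffle_convolution_odd_even_Cons_hd:
  "Poly_Mapping.lookup (shuffle_convolution q (Suc k) (alt_odd c) (alt_even c)) (c # w) =
     Poly_Mapping.lookup (shuffle_convolution q (Suc k) (alt_even (other c)) (alt_even c)) w
     + q^2 * Poly_Mapping.lookup (shuffle_convolution q k (alt_odd c) (alt_odd (other c))) w"
  unfolding lookup_shuffle_convolution shuffle_coeff_odd_even_Cons_hd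
  by (simp add: sum.distrib sum_distrib_left algebra_simps Suc_diff_le)

lemma shuffle_convolution_even_odd_Cons_hd:
  "Poly_Mapping.lookup (shuffle_convolution q (Suc k) (alt_even c) (alt_odd c)) (c # w) =
     q^2 * Poly_Mapping.lookup (shuffle_convolution q k (alt_odd (other c)) (alt_odd c)) w
     + Poly_Mapping.lookup (shuffle_convolution q (Suc k) (alt_even c) (alt_even (other c))) w"
proof -
  have "Poly_Mapping.lookup (shuffle_convolution q (Suc k) (alt_even c) (alt_odd c)) (c # w) =
      (\<Sum>i\<le>Suc k. q^(2*i) * (if i = 0 then 0
         else shuffle_coeff q (alt_odd (other c) (i - 1)) (alt_odd c (Suc k - i)) w))
      + Poly_Mapping.lookup (shuffle_convolution q (Suc k) (alt_even c) (alt_even (other c))) w"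
    unfolding lookup_shuffle_convolution shuffle_coeff_even_odd_Cons_hd
    by (simp add: sum.distrib algebra_simps)
  also have "(\<Sum>i\<le>Suc k. q^(2*i) * (if i = 0 then 0
         else shuffle_coeff q (alt_odd (other c) (i - 1)) (alt_odd c (Suc k - i)) w))
      = q^2 * Poly_Mapping.lookup (shuffle_convolution q k (alt_odd (other c)) (alt_odd c)) w"
    unfolding lookup_shuffle_convolution
    by (simp add: sum.atMost_Suc_shift sum_distrib_left power_add mult_ac power2_eq_square
        del: sum.atMost_Suc)
  finally show ?thesis .
qed

lemma shuffle_convolution_mixed_Cons_other:
  "Poly_Mapping.lookup (shuffle_convolution q n (alt_odd c) (alt_even c)) (other c # w) = 0"
  "Poly_Mapping.lookup (shuffle_convolution q n (alt_even c) (alt_odd c)) (other c # w) = 0"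
  by (simp_all add: lookup_shuffle_convolution shuffle_coeff_odd_even_Cons_other
      shuffle_coeff_even_odd_Cons_other)

lemma shuffle_convolution_mixed_0:
  "shuffle_convolution q 0 (alt_odd c) (alt_even c) =
     shuffle_convolution q 0 (alt_even c) (alt_odd c)"
  by (simp add: shuffle_convolution_def alt_odd_Cons)

text \<open>The two identities are proved together: the coefficients of either one at \<open>c # w\<close> are
  coefficients of the other at \<open>w\<close>.\<close>

lemma lookup_shuffle_convolution_alt:
  fixes q :: "'a::field"
  assumes "q \<noteq> 0"
  shows "(\<forall>m a.
           Poly_Mapping.lookup (shuffle_convolution q (Suc m) (alt_even a) (alt_even (other a))) w =
            q^2 * Poly_Mapping.lookup (shuffle_convolution q m (alt_odd a) (alt_odd (other a))) w)
       \<and> (\<forall>n c. Poly_Mapping.lookup (shuffle_convolution q n (alt_odd c) (alt_even c)) w =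
            Poly_Mapping.lookup (shuffle_convolution q n (alt_even c) (alt_odd c)) w)"
proof (induction w)
  case Nil
  show ?case by (simp add: lookup_shuffle_convolution shuffle_coeff_Nil alt_odd_Cons)
next
  case (Cons c w)
  have even: "Poly_Mapping.lookup
        (shuffle_convolution q (Suc m) (alt_even a) (alt_even (other a))) (c # w) =
      q^2 * Poly_Mapping.lookup (shuffle_convolution q m (alt_odd a) (alt_odd (other a))) (c # w)" for m a
  proof (cases "c = a")
    case True
    then show ?thesis
      using Cons.IH
      by (simp add: shuffle_convolution_even_even_Cons_left shuffle_convolution_odd_odd_Cons_left)
  next
    case False
    then have "c = other a" by (rule neq_imp_eq_other)
    then show ?thesis
      using Cons.IH shuffle_convolution_odd_odd_Cons_right[OF assms, of m a w]
      by (simp add: shuffle_convolution_even_even_Cons_right)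
  qed
  have mixed: "Poly_Mapping.lookup (shuffle_convolution q n (alt_odd d) (alt_even d)) (c # w) =
      Poly_Mapping.lookup (shuffle_convolution q n (alt_even d) (alt_odd d)) (c # w)" for n d
  proof (cases n)
    case 0
    then show ?thesis by (simp add: shuffle_convolution_mixed_0)
  next
    case (Suc k)
    show ?thesis
    proof (cases "c = d")
      case True
      have "Poly_Mapping.lookup (shuffle_convolution q (Suc k) (alt_even (other d)) (alt_even d)) w =
          q^2 * Poly_Mapping.lookup (shuffle_convolution q k (alt_odd (other d)) (alt_odd d)) w"
        using Cons.IH[THEN conjunct1, rule_format, of k "other d"] by simp
      with True Cons.IH show ?thesis
        by (simp add: Suc shuffle_convolution_odd_even_Cons_hd shuffle_convolution_even_odd_Cons_hd)
    next
      case False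
      then have "c = other d" by (rule neq_imp_eq_other)
      then show ?thesis by (simp add: shuffle_convolution_mixed_Cons_other)
    qed
  qed
  show ?case using even mixed by blast
qed

lemma shuffle_convolution_alt_even:
  fixes q :: "'a::field"
  assumes "q \<noteq> 0"
  shows "shuffle_convolution q (Suc m) (alt_even a) (alt_even (other a)) =
    scal (q^2) (shuffle_convolution q m (alt_odd a) (alt_odd (other a)))"
  by (rule poly_mapping_eqI) (simp add: lookup_shuffle_convolution_alt[OF assms])

definition shuffle_qcommutator :: "'a::field \<Rightarrow> 'a \<Rightarrow> word \<Rightarrow> word \<Rightarrow> 'a V" where
  "shuffle_qcommutator q c u v = wshuffle q u v - scal c (wshuffle q v u)"

lemma lookup_shuffle_qcommutator [simp]:
  "Poly_Mapping.lookup (shuffle_qcommutator q c u v) w =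
     shuffle_coeff q u v w - c * shuffle_coeff q v u w"
  by (simp add: shuffle_qcommutator_def lookup_minus)

lemma lookup_qcommutator_letter_alt:
  fixes q :: "'a::field"
  assumes q0: "q \<noteq> 0"
  shows "(\<forall>a i. Poly_Mapping.lookup (shuffle_qcommutator q (q^2) [a] (alt_even a i)) w
            = (1 - q^2) * (if w = alt_odd a i then 1 else 0))
       \<and> (\<forall>a i. q^2 * Poly_Mapping.lookup (shuffle_qcommutator q 1 [a] (alt_odd (other a) i)) w
            = (q^2 - 1) * ((if w = alt_even a (Suc i) then 1 else 0)
                           - (if w = alt_even (other a) (Suc i) then 1 else 0)))"
proof (induction w)
  case Nil
  show ?case by (simp add: shuffle_coeff_Nil alt_even_Suc alt_odd_Cons)
next
  case (Cons c w)
  have odd: "q^2 * Poly_Mapping.lookup (shuffle_qcommutator q 1 [a] (alt_odd (other a) i)) (c # w)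
      = (q^2 - 1) * ((if c # w = alt_even a (Suc i) then 1 else 0)
                     - (if c # w = alt_even (other a) (Suc i) then 1 else 0))" for a i
  proof (cases "c = a")
    case True
    then show ?thesis
      using q0 by (simp add: shuffle_coeff_Cons alt_odd_Cons alt_even_Suc power_int_minus field_simps)
  next
    case False
    then have c: "c = other a" by (rule neq_imp_eq_other)
    have "q^2 * Poly_Mapping.lookup (shuffle_qcommutator q 1 [a] (alt_odd (other a) i)) (c # w)
        = Poly_Mapping.lookup (shuffle_qcommutator q (q^2) [a] (alt_even a i)) w"
      using q0 c by (simp add: shuffle_coeff_Cons alt_odd_Cons alt_even_Suc power_int_minus field_simps)
    also have "\<dots> = (1 - q^2) * (if w = alt_odd a i then 1 else 0)"
      using Cons.IH by blast
    finally show ?thesis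
      using c by (simp add: alt_even_Suc algebra_simps)
  qed
  have even: "Poly_Mapping.lookup (shuffle_qcommutator q (q^2) [a] (alt_even a i)) (c # w)
      = (1 - q^2) * (if c # w = alt_odd a i then 1 else 0)" for a i
  proof (cases "c = a")
    case True
    show ?thesis
    proof (cases i)
      case 0
      then show ?thesis using True by (simp add: shuffle_coeff_Cons alt_odd_Cons field_simps)
    next
      case (Suc j)
      have "Poly_Mapping.lookup (shuffle_qcommutator q (q^2) [a] (alt_even a i)) (c # w)
          = (1 - q^2) * (if w = alt_even a i then 1 else 0)
            + q^2 * Poly_Mapping.lookup (shuffle_qcommutator q 1 [a] (alt_odd (other a) j)) w"
        using True Suc q0 by (simp add: shuffle_coeff_Cons alt_odd_Cons alt_even_Suc field_simps)
      also have "\<dots> = (1 - q^2) * (if w = alt_even a i then 1 else 0)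
          + (q^2 - 1) * ((if w = alt_even a (Suc j) then 1 else 0)
                         - (if w = alt_even (other a) (Suc j) then 1 else 0))"
        using Cons.IH by simp
      finally show ?thesis
        using True Suc by (simp add: alt_odd_Cons alt_even_Suc algebra_simps)
    qed
  next
    case False
    then have "c = other a" by (rule neq_imp_eq_other)
    then show ?thesis by (cases i) (simp_all add: shuffle_coeff_Cons alt_odd_Cons alt_even_Suc)
  qed
  show ?case using odd even by blast
qed

lemma qcommutator_letter_alt_even:
  fixes q :: "'a::field"
  assumes "q \<noteq> 0"
  shows "shuffle_qcommutator q (q^2) [a] (alt_even a i) = scal (1 - q^2) (wvec (alt_odd a i))"
  by (rule poly_mapping_eqI) (simp only: lookup_qcommutator_letter_alt[OF assms] lookup_scal lookup_wvec)

lemma qcommutator_letter_alt_odd: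
  fixes q :: "'a::field"
  assumes "q \<noteq> 0"
  shows "scal (q^2) (shuffle_qcommutator q 1 [a] (alt_odd (other a) i)) =
    scal (q^2 - 1) (wvec (alt_even a (Suc i)) - wvec (alt_even (other a) (Suc i)))"
  by (rule poly_mapping_eqI)
    (simp only: lookup_qcommutator_letter_alt[OF assms] lookup_scal lookup_minus lookup_wvec)

section \<open>The subalgebra generated by the letters\<close>

lemma zero_in_gen_subalg: "0 \<in> gen_subalg q"
  using gen_subalg.smul[OF gen_subalg.one, where c = 0] by simp

lemma diff_in_gen_subalg: "f \<in> gen_subalg q \<Longrightarrow> g \<in> gen_subalg q \<Longrightarrow> f - g \<in> gen_subalg q"
proof -
  assume "f \<in> gen_subalg q" "g \<in> gen_subalg q"
  then have "f + scal (-1) g \<in> gen_subalg q" by (intro gen_subalg.add gen_subalg.smul)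
  moreover have "f + scal (-1) g = f - g" by (rule poly_mapping_eqI) (simp add: lookup_add lookup_minus)
  ultimately show ?thesis by simp
qed

lemma sum_in_gen_subalg: "(\<And>i. i \<in> A \<Longrightarrow> f i \<in> gen_subalg q) \<Longrightarrow> sum f A \<in> gen_subalg q"
  by (induction A rule: infinite_finite_induct) (simp_all add: zero_in_gen_subalg gen_subalg.add)

lemma scal_in_gen_subalg_iff: "c \<noteq> 0 \<Longrightarrow> scal c f \<in> gen_subalg q \<longleftrightarrow> f \<in> gen_subalg q"
  using gen_subalg.smul[where f = "scal c f" and c = "inverse c"] gen_subalg.smul[where f = f and c = c]
  by auto

lemma letter_in_gen_subalg: "wvec [a] \<in> gen_subalg q"
  by (cases a) (auto intro: gen_subalg.gx gen_subalg.gy)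

lemma wshuffle_in_gen_subalg:
  "wvec u \<in> gen_subalg q \<Longrightarrow> wvec v \<in> gen_subalg q \<Longrightarrow> wshuffle q u v \<in> gen_subalg q"
  using gen_subalg.mult[of "wvec u" q "wvec v"] by (simp add: qstar_def wvec_def)

lemma qcommutator_in_gen_subalg:
  "wvec u \<in> gen_subalg q \<Longrightarrow> wvec v \<in> gen_subalg q \<Longrightarrow> shuffle_qcommutator q c u v \<in> gen_subalg q"
  unfolding shuffle_qcommutator_def
  by (intro diff_in_gen_subalg gen_subalg.smul wshuffle_in_gen_subalg)

lemma shuffle_convolution_in_gen_subalg:
  "(\<And>i. i \<le> n \<Longrightarrow> wvec (f i) \<in> gen_subalg q) \<Longrightarrow> (\<And>i. i \<le> n \<Longrightarrow> wvec (g i) \<in> gen_subalg q)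
    \<Longrightarrow> shuffle_convolution q n f g \<in> gen_subalg q"
  unfolding shuffle_convolution_def
  by (intro sum_in_gen_subalg gen_subalg.smul wshuffle_in_gen_subalg) auto

lemma shuffle_convolution_Suc_ends:
  "shuffle_convolution q (Suc m) f g = wshuffle q (f 0) (g (Suc m))
     + (\<Sum>i<m. scal (q^(2 * Suc i)) (wshuffle q (f (Suc i)) (g (m - i))))
     + scal (q^(2 * Suc m)) (wshuffle q (f (Suc m)) (g 0))"
proof -
  define h where "h i = scal (q^(2*i)) (wshuffle q (f i) (g (Suc m - i)))" for i
  have "shuffle_convolution q (Suc m) f g = h 0 + (\<Sum>i\<le>m. h (Suc i))"
    unfolding shuffle_convolution_def h_def by (simp only: sum.atMost_Suc_shift)
  also have "(\<Sum>i\<le>m. h (Suc i)) = (\<Sum>i<m. h (Suc i)) + h (Suc m)"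
    by (simp only: lessThan_Suc_atMost[symmetric] sum.lessThan_Suc)
  finally show ?thesis by (simp add: h_def)
qed

lemma alt_odd_in_gen_subalg:
  fixes q :: "'a::field"
  assumes "q \<noteq> 0" and "q^2 \<noteq> 1" and "wvec (alt_even a k) \<in> gen_subalg q"
  shows "wvec (alt_odd a k) \<in> gen_subalg q"
proof -
  have "scal (1 - q^2) (wvec (alt_odd a k)) \<in> gen_subalg q"
    unfolding qcommutator_letter_alt_even[OF assms(1), symmetric]
    by (intro qcommutator_in_gen_subalg letter_in_gen_subalg assms(3))
  with assms(2) show ?thesis by (simp add: scal_in_gen_subalg_iff)
qed

lemma alt_even_in_gen_subalg:
  fixes q :: "'a::field"
  assumes q0: "q \<noteq> 0" and q2: "q^2 \<noteq> 1" and qm: "q^(2 * Suc m) \<noteq> -1"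
    and even: "\<And>c i. i \<le> m \<Longrightarrow> wvec (alt_even c i) \<in> gen_subalg q"
    and odd: "\<And>c i. i \<le> m \<Longrightarrow> wvec (alt_odd c i) \<in> gen_subalg q"
  shows "wvec (alt_even a (Suc m)) \<in> gen_subalg q"
proof -
  define A B :: "'a V" and Q
    where "A = wvec (alt_even a (Suc m))" and "B = wvec (alt_even (other a) (Suc m))"
      and "Q = q^(2 * Suc m)"
  have "scal (q^2 - 1) (A - B) \<in> gen_subalg q"
    unfolding A_def B_def qcommutator_letter_alt_odd[OF q0, symmetric]
    by (intro gen_subalg.smul qcommutator_in_gen_subalg letter_in_gen_subalg odd) simp
  then have "A - B \<in> gen_subalg q"
    using q2 by (simp add: scal_in_gen_subalg_iff)
  txt \<open>The extreme terms of the convolution; all others involve shorter alternating words.\<close>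
  moreover have "B + scal Q A = scal (q^2) (shuffle_convolution q m (alt_odd a) (alt_odd (other a)))
      - (\<Sum>i<m. scal (q^(2 * Suc i)) (wshuffle q (alt_even a (Suc i)) (alt_even (other a) (m - i))))"
    using shuffle_convolution_Suc_ends[of q m "alt_even a" "alt_even (other a)"]
      shuffle_convolution_alt_even[OF q0, of m a]
    by (simp add: A_def B_def Q_def algebra_simps)
  then have "B + scal Q A \<in> gen_subalg q"
    by (simp only:) (intro diff_in_gen_subalg gen_subalg.smul sum_in_gen_subalg wshuffle_in_gen_subalg
        shuffle_convolution_in_gen_subalg even odd; simp)
  ultimately have "(A - B) + (B + scal Q A) \<in> gen_subalg q"
    by (rule gen_subalg.add)
  also have "(A - B) + (B + scal Q A) = scal (1 + Q) A"
    by (rule poly_mapping_eqI) (simp add: lookup_add lookup_minus algebra_simps)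
  finally show ?thesis
    using qm by (simp add: A_def Q_def scal_in_gen_subalg_iff add_eq_0_iff)
qed

lemma alt_word_in_gen_subalg:
  fixes q :: "'a::field"
  assumes q0: "q \<noteq> 0" and q2: "q^2 \<noteq> 1" and qm: "\<And>m. q^(2 * Suc m) \<noteq> -1"
  shows "wvec (alt_word a n) \<in> gen_subalg q"
proof (induction n arbitrary: a rule: less_induct)
  case (less n)
  define k where "k = n div 2"
  have "n = 2 * k \<or> n = Suc (2 * k)" unfolding k_def by presburger
  then consider (even) "alt_word a n = alt_even a k" "n = 2 * k"
    | (odd) "alt_word a n = alt_odd a k" "n = Suc (2 * k)"
    by (auto simp: alt_even_def alt_odd_def)
  then show ?case
  proof cases
    case even
    show ?thesis
    proof (cases k)
      case 0
      with even show ?thesis by (simp add: gen_subalg.one)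
    next
      case (Suc m)
      have "wvec (alt_even c i) \<in> gen_subalg q" if "i \<le> m" for c i
        unfolding alt_even_def using that even(2) Suc by (intro less) simp
      moreover have "wvec (alt_odd c i) \<in> gen_subalg q" if "i \<le> m" for c i
        unfolding alt_odd_def using that even(2) Suc by (intro less) simp
      ultimately show ?thesis
        using even(1) Suc alt_even_in_gen_subalg[OF q0 q2 qm] by simp
    qed
  next
    case odd
    have "wvec (alt_even a k) \<in> gen_subalg q"
      using less odd by (simp add: alt_even_def)
    with odd show ?thesis by (simp add: alt_odd_in_gen_subalg q0 q2)
  qed
qed

theorem theorem8p3:
  fixes q :: "'a::field"
  assumes "q \<noteq> 0"
    and "\<forall>n::nat. n \<ge> 1 \<longrightarrow> q ^ n \<noteq> 1"
    and "alternating w"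
  shows "wvec w \<in> gen_subalg q"
proof -
  have q2: "q^2 \<noteq> 1" using assms(2) by auto
  have qm: "q^(2 * Suc m) \<noteq> -1" for m
  proof
    assume "q^(2 * Suc m) = -1"
    then have "q^(2 * Suc m * 2) = 1" by (simp only: power_mult) simp
    moreover have "2 * Suc m * 2 \<ge> 1" by simp
    ultimately show False using assms(2) by blast
  qed
  have "w = alt_word (hd w) (length w)"
    using assms(3) by (rule alternating_eq_alt_word)
  with alt_word_in_gen_subalg[OF assms(1) q2 qm] show ?thesis by metis
qed

end
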